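(* Let $\mathcal{A}=\{\alpha_1<\dots<\alpha_m\}\subset(0,1)$, $|\mathcal{A}|=m$. Let $(b_t)$ be base forecasts with $b_t\in\mathcal{K}$ and $(y_t)$ real outcomes with $|y_t-b_t^{\alpha}|\le R$ for all $\alpha\in\mathcal{A}$ and all $t$. Let $\ell_t(\theta)=\rho_{\mathcal{A}}(b_t+\theta,y_t)$. Let $\theta_1,\dots,\theta_T$ be the played offsets of MultiQT with constant delay $D\ge0$ and learning rate $\eta>0$ started from $\tilde\theta_1=\mathbf{0}$, and let $\mathcal{C}=\bigcap_{t=1}^{T+D+1}(\mathcal{K}-b_t)$. Then for every $\theta\in\mathcal{C}$, $$\mathrm{Regret}_T(\theta):=\frac1T\sum_{t=1}^T\ell_t(\theta_t)-\frac1T\sum_{t=1}^T\ell_t(\theta)\le\frac{R^2|\mathcal{A}|}{2\eta T}+2\eta|\mathcal{A}|(D+1).$$ In particular, for $\eta=\frac R2\sqrt{\frac{1}{(D+1)T}}$, $\mathrm{Regret}_T(\theta)\le\frac{2R|\mathcal{A}|\sqrt{D+1}}{\sqrt T}$.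
   Context: $\mathcal{K}=\{x\in\mathbb{R}^m:x_1\le\dots\le x_m\}$; $\Pi_C$ is Euclidean projection; $C-v=\{x-v:x\in C\}$. Quantile loss: $\rho_\alpha(\hat y,y)=\alpha|y-\hat y|$ if $y-\hat y\ge0$ and $(1-\alpha)|y-\hat y|$ otherwise; $\rho_{\mathcal{A}}(q,y)=\sum_{\alpha\in\mathcal{A}}\rho_\alpha(q^{\alpha},y)$. MultiQT with constant delay $D\ge0$: for $t=1,2,\dots$, $\theta_t=\Pi_{\mathcal{K}-b_t}(\tilde\theta_t)$, forecast $q_t=b_t+\theta_t$, $\mathrm{cov}_t^{\alpha}=\mathbb{1}\{y_t\le q_t^{\alpha}\}$, and $\tilde\theta_{t+1}^{\alpha}=\tilde\theta_t^{\alpha}-\eta(\mathrm{cov}_{t-D}^{\alpha}-\alpha)$ for $t>D$, $\tilde\theta_{t+1}=\tilde\theta_t$ for $t\le D$. *)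

theory Defs
  imports "HOL-Analysis.Analysis"
begin

text \<open>Coordinates of R^m are indexed by a finite linearly ordered type 'm
  (with CARD('m) = m); coordinate i corresponds to quantile level alpha i.\<close>

definition Kord :: "(real ^ ('m::{finite,linorder})) set" where
  "Kord = {x. \<forall>i j. i \<le> j \<longrightarrow> x $ i \<le> x $ j}"

definition shift_set :: "'a::ab_group_add set \<Rightarrow> 'a \<Rightarrow> 'a set" where
  "shift_set C v = (\<lambda>x. x - v) ` C"

definition rho :: "real \<Rightarrow> real \<Rightarrow> real \<Rightarrow> real" where
  "rho a yhat y = (if y - yhat \<ge> 0 then a * \<bar>y - yhat\<bar> else (1 - a) * \<bar>y - yhat\<bar>)"

definition rhoA :: "('m::{finite,linorder} \<Rightarrow> real) \<Rightarrow> real ^ ('m::{finite,linorder}) \<Rightarrow> real \<Rightarrow> real" where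
  "rhoA alpha q y = (\<Sum>i\<in>UNIV. rho (alpha i) (q $ i) y)"

definition play :: "(nat \<Rightarrow> real ^ ('m::{finite,linorder})) \<Rightarrow> nat \<Rightarrow> real ^ ('m::{finite,linorder}) \<Rightarrow> real ^ ('m::{finite,linorder})" where
  "play b t th = closest_point (shift_set Kord (b t)) th"

fun mqt_tilde :: "('m::{finite,linorder} \<Rightarrow> real) \<Rightarrow> real \<Rightarrow> nat \<Rightarrow> (nat \<Rightarrow> real ^ ('m::{finite,linorder}))
    \<Rightarrow> (nat \<Rightarrow> real) \<Rightarrow> nat \<Rightarrow> real ^ ('m::{finite,linorder})" where
  "mqt_tilde alpha eta D b y 0 = 0"
| "mqt_tilde alpha eta D b y (Suc t) =
     (if t \<le> D then mqt_tilde alpha eta D b y t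
      else mqt_tilde alpha eta D b y t
        - eta *\<^sub>R (\<chi> i. (if y (t - D) \<le> b (t - D) $ i + play b (t - D) (mqt_tilde alpha eta D b y (t - D)) $ i
                          then 1 else 0) - alpha i))"

definition mqt_theta :: "('m::{finite,linorder} \<Rightarrow> real) \<Rightarrow> real \<Rightarrow> nat \<Rightarrow> (nat \<Rightarrow> real ^ ('m::{finite,linorder}))
    \<Rightarrow> (nat \<Rightarrow> real) \<Rightarrow> nat \<Rightarrow> real ^ ('m::{finite,linorder})" where
  "mqt_theta alpha eta D b y t = play b t (mqt_tilde alpha eta D b y t)"

definition regret :: "('m::{finite,linorder} \<Rightarrow> real) \<Rightarrow> (nat \<Rightarrow> real ^ ('m::{finite,linorder})) \<Rightarrow> (nat \<Rightarrow> real)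
    \<Rightarrow> (nat \<Rightarrow> real ^ ('m::{finite,linorder})) \<Rightarrow> nat \<Rightarrow> real ^ ('m::{finite,linorder}) \<Rightarrow> real" where
  "regret alpha b y th T theta =
     (1 / real T) * (\<Sum>t=1..T. rhoA alpha (b t + th t) (y t))
     - (1 / real T) * (\<Sum>t=1..T. rhoA alpha (b t + theta) (y t))"

end

theory Submission
  imports Defs
begin

text \<open>MultiQT is lazy projected gradient descent with delayed feedback on the losses
  \<open>\<ell>\<^sub>t\<close>: the unprojected iterate is \<open>-\<eta>\<close> times the sum of the subgradients
  \<open>cov\<^sub>s - \<alpha>\<close> received so far. Telescoping \<open>\<parallel>z\<^sub>t - u\<parallel>\<^sup>2\<close> bounds the regret of these
  unprojected points by \<open>\<parallel>u\<parallel>\<^sup>2/(2\<eta>) + \<eta>T|\<A>|/2\<close>, and the delay costs at most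
  \<open>\<eta>D|\<A>|\<close> per round since the subgradients have entries in \<open>[-1, 1]\<close>. The projection
  costs nothing: evaluated at the projected point, the coverage indicator is monotone along the
  ordered forecast, and an indicator of an upper set minus the monotone vector \<open>\<alpha>\<close> has
  nonpositive inner product with the projection step onto a translate of \<open>\<K>\<close>. Finally,
  clipping the comparator to \<open>[-R, R]\<^sup>m\<close> does not increase its loss, so one may compare with a
  \<open>u\<close> of \<open>\<parallel>u\<parallel>\<^sup>2 \<le> R\<^sup>2|\<A>|\<close>. The bound thus holds for every comparator \<open>\<theta>\<close>.\<close>

lemma norm_le_sqrt_card_cart:
  fixes x :: "real ^ 'n"
  assumes "\<And>i. \<bar>x $ i\<bar> \<le> c"
  shows "norm x \<le> sqrt (real CARD('n)) * c"
proof -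
  have "norm x \<le> L2_set (\<lambda>i. c) (UNIV :: 'n set)"
    unfolding norm_vec_def using assms by (intro L2_set_mono) auto
  also have "\<dots> = sqrt (real CARD('n)) * c"
    using assms[of undefined] by (simp add: L2_set_constant)
  finally show ?thesis .
qed

lemma mem_shift_set_iff: "x \<in> shift_set C v \<longleftrightarrow> x + v \<in> C"
  unfolding shift_set_def by (auto intro!: image_eqI[of _ _ "x + v"])

lemma shift_set_eq_translation: "shift_set C v = (+) (- v) ` C"
  unfolding shift_set_def by (simp cong: image_cong_simp)

lemma closed_shift_set: "closed C \<Longrightarrow> closed (shift_set C (v::'a::real_normed_vector))"
  unfolding shift_set_eq_translation by (rule closed_translation)

lemma convex_shift_set: "convex C \<Longrightarrow> convex (shift_set C (v::'a::real_vector))"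
  unfolding shift_set_eq_translation by (rule convex_translation)

lemma closed_Kord: "closed (Kord :: (real ^ 'm::{finite,linorder}) set)"
  unfolding Kord_def
proof (intro closed_Collect_all)
  fix i j :: 'm
  show "closed {x :: (real, 'm) vec. i \<le> j \<longrightarrow> x $ i \<le> x $ j}"
    by (cases "i \<le> j") (simp_all add: closed_Collect_le continuous_on_component)
qed

lemma convex_Kord: "convex Kord"
  unfolding convex_def Kord_def by (auto intro!: add_mono mult_left_mono)

lemma Kord_add: "x \<in> Kord \<Longrightarrow> z \<in> Kord \<Longrightarrow> x + z \<in> Kord"
  unfolding Kord_def by (auto intro: add_mono)

lemma vec_lambda_mem_Kord_iff: "(\<chi> i. f i) \<in> Kord \<longleftrightarrow> mono f"
  unfolding Kord_def mono_def by simp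

lemma Kord_diff_scaleR_upper_indicator:
  fixes q :: "real ^ 'm::{finite,linorder}"
  assumes "q \<in> Kord"
  obtains e where "e > 0" "q - e *\<^sub>R (\<chi> i. if y \<le> q $ i then 1 else 0) \<in> Kord"
proof
  define e where "e = Min (insert 1 {y - q $ i | i. q $ i < y})"
  show "e > 0"
    unfolding e_def by (subst Min_gr_iff) auto
  have e_le: "e \<le> y - q $ i" if "q $ i < y" for i
    unfolding e_def using that by (intro Min_le) auto
  show "q - e *\<^sub>R (\<chi> i. if y \<le> q $ i then 1 else 0) \<in> Kord"
    using assms e_le \<open>e > 0\<close> unfolding Kord_def by (force simp: not_le)
qed

lemma rho_eq: "rho a q y = (if q \<le> y then a * (y - q) else (1 - a) * (q - y))"
  unfolding rho_def by auto

lemma rho_subgradient: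
  assumes "0 \<le> a" "a \<le> 1"
  shows "rho a q y + ((if y \<le> q then 1 else 0) - a) * (q' - q) \<le> rho a q' y"
proof -
  have "(1 - a) * (q' - q) \<le> a * (y - q')" if "y \<le> q" "q' \<le> y"
    using that assms mult_nonneg_nonpos[of "1 - a" "q' - q"] mult_nonneg_nonneg[of a "y - q'"]
    by linarith
  moreover have "- a * (q' - q) \<le> (1 - a) * (q' - y)" if "q < y" "y < q'"
    using that assms mult_nonneg_nonneg[of a "q' - q"] mult_nonneg_nonneg[of "1 - a" "q' - y"]
    by linarith
  ultimately show ?thesis
    by (auto simp: rho_eq algebra_simps)
qed

lemma rho_mono_above:
  "a \<le> 1 \<Longrightarrow> y \<le> q \<Longrightarrow> q \<le> q' \<Longrightarrow> rho a q y \<le> rho a q' y"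
  by (auto simp: rho_eq intro: mult_left_mono)

lemma rho_antimono_below:
  "0 \<le> a \<Longrightarrow> q \<le> y \<Longrightarrow> q' \<le> q \<Longrightarrow> rho a q y \<le> rho a q' y"
  by (auto simp: rho_eq intro: mult_left_mono)

lemma rho_clip_le:
  assumes "\<bar>y - c\<bar> \<le> R" "0 \<le> a" "a \<le> 1"
  shows "rho a (c + max (- R) (min R x)) y \<le> rho a (c + x) y"
proof -
  consider "R < x" | "x < - R" | "max (- R) (min R x) = x" by linarith
  then show ?thesis
  proof cases
    case 1
    then show ?thesis using assms by (intro rho_mono_above) auto
  next
    case 2
    then show ?thesis using assms by (intro rho_antimono_below) auto
  qed simp
qed

definition rhoA_subgrad :: "('m::{finite,linorder} \<Rightarrow> real) \<Rightarrow> real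
    \<Rightarrow> real ^ ('m::{finite,linorder}) \<Rightarrow> real ^ ('m::{finite,linorder})" where
  "rhoA_subgrad alpha y q = (\<chi> i. (if y \<le> q $ i then 1 else 0) - alpha i)"

lemma rhoA_subgradient:
  assumes "\<And>i. 0 \<le> alpha i \<and> alpha i \<le> 1"
  shows "rhoA alpha q y + inner (rhoA_subgrad alpha y q) (q' - q) \<le> rhoA alpha q' y"
  unfolding rhoA_def rhoA_subgrad_def inner_vec_def sum.distrib[symmetric]
  using assms by (intro sum_mono) (simp add: rho_subgradient)

lemma norm_rhoA_subgrad_le:
  fixes q :: "real ^ ('m::{finite,linorder})"
  assumes "\<And>i. 0 \<le> alpha i \<and> alpha i \<le> 1"
  shows "norm (rhoA_subgrad alpha y q) \<le> sqrt (real CARD('m))"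
  using norm_le_sqrt_card_cart[of "rhoA_subgrad alpha y q" 1] assms
  by (simp add: rhoA_subgrad_def)

lemma inner_rhoA_subgrad_closest_point_le:
  fixes v p :: "real ^ ('m::{finite,linorder})"
  assumes "mono alpha"
  defines "th \<equiv> closest_point (shift_set Kord v) p"
  shows "inner (rhoA_subgrad alpha y (v + th)) (th - p) \<le> 0"
proof -
  have normal: "inner (p - th) (x - th) \<le> 0" if "x + v \<in> Kord" for x
    unfolding th_def using that
    by (intro closest_point_dot convex_shift_set closed_shift_set convex_Kord closed_Kord)
       (simp_all add: mem_shift_set_iff)
  have "- v \<in> shift_set Kord v"
    by (simp add: mem_shift_set_iff Kord_def)
  then have "th \<in> shift_set Kord v"
    unfolding th_def by (intro closest_point_in_set closed_shift_set closed_Kord) auto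
  then have q: "v + th \<in> Kord"
    by (simp add: mem_shift_set_iff add.commute)
  \<comment> \<open>\<open>p - th\<close> lies in the normal cone at \<open>th\<close>; moving \<open>v + th\<close> up by the monotone vector
    \<open>a\<close>, or down by a little on the upper set \<open>{i. y \<le> (v + th) $ i}\<close>, stays inside \<open>Kord\<close>.\<close>
  define a :: "(real, 'm) vec" where "a = (\<chi> i. alpha i)"
  define c :: "(real, 'm) vec" where "c = (\<chi> i. if y \<le> (v + th) $ i then 1 else 0)"
  have "(th + a) + v \<in> Kord"
    using Kord_add[OF q, of a] assms by (simp add: a_def vec_lambda_mem_Kord_iff algebra_simps)
  then have pa: "inner (p - th) a \<le> 0"
    using normal by fastforce
  obtain e where "e > 0" and "v + th - e *\<^sub>R c \<in> Kord"
    using Kord_diff_scaleR_upper_indicator[OF q] unfolding c_def by blast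
  then have "- e * inner (p - th) c \<le> 0"
    using normal[of "th - e *\<^sub>R c"] by (simp add: algebra_simps)
  then have pc: "inner (p - th) c \<ge> 0"
    using \<open>e > 0\<close> by (simp add: zero_le_mult_iff)
  have "rhoA_subgrad alpha y (v + th) = c - a"
    by (simp add: rhoA_subgrad_def a_def c_def vec_eq_iff)
  then show ?thesis
    using pa pc by (simp add: inner_diff_left inner_diff_right inner_commute)
qed

definition clip :: "real \<Rightarrow> real ^ ('m::{finite,linorder}) \<Rightarrow> real ^ ('m::{finite,linorder})"
  where
  "clip R x = (\<chi> i. max (- R) (min R (x $ i)))"

lemma norm_clip_le: "0 \<le> R \<Longrightarrow> norm (clip R x) \<le> sqrt (real CARD('m)) * R"
  for x :: "real ^ ('m::{finite,linorder})"
  by (rule norm_le_sqrt_card_cart) (simp add: clip_def)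

lemma rhoA_clip_le:
  assumes "\<And>i. \<bar>y - c $ i\<bar> \<le> R" "\<And>i. 0 \<le> alpha i \<and> alpha i \<le> 1"
  shows "rhoA alpha (c + clip R x) y \<le> rhoA alpha (c + x) y"
  unfolding rhoA_def clip_def using assms by (intro sum_mono) (simp add: rho_clip_le)

lemma lazy_gradient_descent_identity:
  fixes g :: "nat \<Rightarrow> 'a::real_inner"
  assumes "eta \<noteq> 0"
  defines "z \<equiv> \<lambda>t. - eta *\<^sub>R (\<Sum>s\<in>{1..<t}. g s)"
  shows "(\<Sum>t=1..n. inner (g t) (z t - u))
    = (norm u ^ 2 - norm (z (n + 1) - u) ^ 2) / (2 * eta) + eta / 2 * (\<Sum>t=1..n. norm (g t) ^ 2)"
proof (induction n)
  case 0
  then show ?case by (simp add: z_def)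
next
  case (Suc n)
  have step: "z (Suc n + 1) - u = (z (n + 1) - u) - eta *\<^sub>R g (Suc n)"
    by (simp add: z_def algebra_simps)
  have expand: "norm (w - eta *\<^sub>R h) ^ 2 = norm w ^ 2 - 2 * eta * inner h w + eta ^ 2 * norm h ^ 2"
    for w h :: 'a
    unfolding power2_norm_eq_inner
    by (simp add: inner_diff_left inner_diff_right inner_commute power2_eq_square algebra_simps)
  have "norm (z (Suc n + 1) - u) ^ 2
      = norm (z (n + 1) - u) ^ 2 - 2 * eta * inner (g (Suc n)) (z (Suc n) - u) + eta ^ 2 * norm (g (Suc n)) ^ 2"
    unfolding step expand by simp
  with Suc.IH assms(1) show ?case
    by (simp add: field_simps power2_eq_square)
qed

lemma inner_delayed_sum_le:
  fixes g :: "nat \<Rightarrow> 'a::real_inner"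
  assumes "\<And>s. norm (g s) \<le> G"
  shows "inner (g t) ((\<Sum>s\<in>{1..<t}. g s) - (\<Sum>s\<in>{1..<t - D}. g s)) \<le> D * G ^ 2"
proof -
  have gg: "inner (g t) (g s) \<le> G ^ 2" for s
  proof -
    have "inner (g t) (g s) \<le> norm (g t) * norm (g s)"
      by (rule norm_cauchy_schwarz)
    also have "\<dots> \<le> G * G"
      using assms norm_ge_zero order_trans by (intro mult_mono) blast+
    finally show ?thesis
      by (simp add: power2_eq_square)
  qed
  define A where "A = {1..<t} - {1..<t - D}"
  have "card A \<le> D"
    using card_mono[of "{t - D..<t}" A] unfolding A_def by fastforce
  have "inner (g t) ((\<Sum>s\<in>{1..<t}. g s) - (\<Sum>s\<in>{1..<t - D}. g s)) = (\<Sum>s\<in>A. inner (g t) (g s))"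
    unfolding A_def by (subst sum_diff) (auto simp: inner_sum_right inner_diff_right)
  also have "\<dots> \<le> (\<Sum>s\<in>A. G ^ 2)"
    using gg by (rule sum_mono)
  also have "\<dots> \<le> D * G ^ 2"
    using \<open>card A \<le> D\<close> by (simp add: mult_right_mono)
  finally show ?thesis .
qed

definition mqt_grad :: "('m::{finite,linorder} \<Rightarrow> real) \<Rightarrow> real \<Rightarrow> nat
    \<Rightarrow> (nat \<Rightarrow> real ^ ('m::{finite,linorder})) \<Rightarrow> (nat \<Rightarrow> real) \<Rightarrow> nat \<Rightarrow> real ^ ('m::{finite,linorder})" where
  "mqt_grad alpha eta D b y t = rhoA_subgrad alpha (y t) (b t + mqt_theta alpha eta D b y t)"

lemma mqt_tilde_eq_sum:
  "mqt_tilde alpha eta D b y t = - eta *\<^sub>R (\<Sum>s\<in>{1..<t - D}. mqt_grad alpha eta D b y s)"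
proof (induction t)
  case 0
  then show ?case by simp
next
  case (Suc t)
  show ?case
  proof (cases "t \<le> D")
    case True
    then have "Suc t - D \<le> 1" "t - D = 0" by auto
    with Suc.IH True show ?thesis by simp
  next
    case False
    then have "Suc t - D = Suc (t - D)" "1 \<le> t - D" by auto
    with Suc.IH False show ?thesis
      by (simp add: mqt_grad_def rhoA_subgrad_def mqt_theta_def algebra_simps)
  qed
qed

lemma mqt_round_regret_le:
  fixes alpha :: "'m::{finite,linorder} \<Rightarrow> real" and b :: "nat \<Rightarrow> real ^ ('m::{finite,linorder})"
    and y :: "nat \<Rightarrow> real" and D :: nat and u :: "real ^ ('m::{finite,linorder})"
  assumes "mono alpha" "\<And>i. 0 \<le> alpha i \<and> alpha i \<le> 1" "0 \<le> eta"
  defines "g \<equiv> mqt_grad alpha eta D b y"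
  defines "z \<equiv> \<lambda>t. - eta *\<^sub>R (\<Sum>s\<in>{1..<t}. g s)"
  shows "rhoA alpha (b t + mqt_theta alpha eta D b y t) (y t) - rhoA alpha (b t + u) (y t)
    \<le> inner (g t) (z t - u) + eta * D * CARD('m)"
proof -
  define th where "th = mqt_tilde alpha eta D b y t"
  define pl where "pl = mqt_theta alpha eta D b y t"
  have pl_eq: "pl = closest_point (shift_set Kord (b t)) th"
    by (simp add: pl_def th_def mqt_theta_def play_def)
  have "rhoA alpha (b t + pl) (y t) + inner (g t) (u - pl) \<le> rhoA alpha (b t + u) (y t)"
    using rhoA_subgradient[OF assms(2), where q = "b t + pl" and y = "y t" and q' = "b t + u"]
    by (simp add: g_def mqt_grad_def pl_def)
  then have subgradient: "rhoA alpha (b t + pl) (y t) - rhoA alpha (b t + u) (y t) \<le> inner (g t) (pl - u)"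
    by (simp add: inner_diff_right)
  have projection: "inner (g t) (pl - th) \<le> 0"
    using inner_rhoA_subgrad_closest_point_le[OF assms(1), where y = "y t" and v = "b t" and p = th]
    unfolding g_def mqt_grad_def pl_def[symmetric] pl_eq by simp
  have "inner (g t) (th - z t) = eta * inner (g t) ((\<Sum>s\<in>{1..<t}. g s) - (\<Sum>s\<in>{1..<t - D}. g s))"
    by (simp add: th_def z_def mqt_tilde_eq_sum g_def algebra_simps inner_diff_right)
  also have "\<dots> \<le> eta * (D * sqrt (real CARD('m)) ^ 2)"
    using assms(2,3) norm_rhoA_subgrad_le
    by (intro mult_left_mono inner_delayed_sum_le) (auto simp: g_def mqt_grad_def)
  finally have delay: "inner (g t) (th - z t) \<le> eta * D * CARD('m)"
    by simp
  have "inner (g t) (pl - u) = inner (g t) (pl - th) + inner (g t) (th - z t) + inner (g t) (z t - u)"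
    by (simp add: inner_diff_right)
  with subgradient projection delay show ?thesis
    unfolding pl_def by linarith
qed

lemma mqt_cumulative_regret_le:
  fixes alpha :: "'m::{finite,linorder} \<Rightarrow> real" and b :: "nat \<Rightarrow> real ^ ('m::{finite,linorder})"
    and theta :: "real ^ ('m::{finite,linorder})"
  assumes "mono alpha" "\<And>i. 0 \<le> alpha i \<and> alpha i \<le> 1"
    and "\<And>t i. 1 \<le> t \<Longrightarrow> \<bar>y t - b t $ i\<bar> \<le> R" and "0 < eta"
  shows "(\<Sum>t=1..T. rhoA alpha (b t + mqt_theta alpha eta D b y t) (y t))
      - (\<Sum>t=1..T. rhoA alpha (b t + theta) (y t))
    \<le> R\<^sup>2 * CARD('m) / (2 * eta) + eta * CARD('m) * (2 * D + 1) * T / 2"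
proof -
  define m where "m = real CARD('m)"
  define g where "g = mqt_grad alpha eta D b y"
  define z where "z t = - eta *\<^sub>R (\<Sum>s\<in>{1..<t}. g s)" for t
  define u where "u = clip R theta"
  have "0 \<le> R"
    using assms(3)[of 1] abs_ge_zero order_trans by blast
  then have "norm u ^ 2 \<le> (sqrt m * R) ^ 2"
    unfolding u_def m_def by (intro power_mono norm_clip_le) auto
  then have norm_u: "norm u ^ 2 \<le> R\<^sup>2 * m"
    by (simp add: m_def power_mult_distrib mult.commute)
  have "norm (g t) ^ 2 \<le> sqrt m ^ 2" for t
    unfolding g_def mqt_grad_def m_def by (intro power_mono norm_rhoA_subgrad_le assms(2)) auto
  then have "(\<Sum>t=1..T. norm (g t) ^ 2) \<le> T * m"
    using sum_mono[of "{1..T}" "\<lambda>t. norm (g t) ^ 2" "\<lambda>_. m"] by (simp add: m_def)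
  moreover have "norm u ^ 2 - norm (z (T + 1) - u) ^ 2 \<le> R\<^sup>2 * m"
    using norm_u zero_le_power2[of "norm (z (T + 1) - u)"] by linarith
  ultimately have telescope: "(norm u ^ 2 - norm (z (T + 1) - u) ^ 2) / (2 * eta)
      + eta / 2 * (\<Sum>t=1..T. norm (g t) ^ 2) \<le> R\<^sup>2 * m / (2 * eta) + eta / 2 * (T * m)"
    using assms(4) by (intro add_mono divide_right_mono mult_left_mono) auto
  have identity: "(\<Sum>t=1..T. inner (g t) (z t - u))
      = (norm u ^ 2 - norm (z (T + 1) - u) ^ 2) / (2 * eta) + eta / 2 * (\<Sum>t=1..T. norm (g t) ^ 2)"
    using lazy_gradient_descent_identity[where eta = eta and g = g and n = T and u = u] assms(4)
    by (simp add: z_def)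
  have "(\<Sum>t=1..T. rhoA alpha (b t + mqt_theta alpha eta D b y t) (y t))
      - (\<Sum>t=1..T. rhoA alpha (b t + theta) (y t))
    \<le> (\<Sum>t=1..T. rhoA alpha (b t + mqt_theta alpha eta D b y t) (y t) - rhoA alpha (b t + u) (y t))"
    unfolding sum_subtractf[symmetric] u_def using assms(2,3)
    by (intro sum_mono diff_left_mono rhoA_clip_le) auto
  also have "\<dots> \<le> (\<Sum>t=1..T. inner (g t) (z t - u) + eta * D * m)"
    unfolding g_def z_def m_def using assms(1,2,4)
    by (intro sum_mono mqt_round_regret_le) auto
  also have "\<dots> = (norm u ^ 2 - norm (z (T + 1) - u) ^ 2) / (2 * eta)
      + eta / 2 * (\<Sum>t=1..T. norm (g t) ^ 2) + T * (eta * D * m)"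
    unfolding sum.distrib identity by simp
  also have "\<dots> \<le> R\<^sup>2 * m / (2 * eta) + eta / 2 * (T * m) + T * (eta * D * m)"
    using telescope by simp
  also have "\<dots> = R\<^sup>2 * CARD('m) / (2 * eta) + eta * CARD('m) * (2 * D + 1) * T / 2"
    by (simp add: m_def field_simps)
  finally show ?thesis .
qed

lemma tuned_step_size_bound_eq:
  fixes R m :: real and D T :: nat
  assumes "eta = R / 2 * sqrt (1 / (real (D + 1) * real T))" "0 < eta" "1 \<le> T"
  shows "R\<^sup>2 * m / (2 * eta * real T) + 2 * eta * m * real (D + 1)
    = 2 * R * m * sqrt (real (D + 1)) / sqrt (real T)"
proof -
  define s where "s = sqrt (real (D + 1))"
  define r where "r = sqrt (real T)"
  have "0 < s" "0 < r" and D: "real (D + 1) = s\<^sup>2" and T: "real T = r\<^sup>2"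
    using assms(3) by (simp_all add: s_def r_def)
  have eta: "eta = R / (2 * s * r)"
    unfolding assms(1) s_def r_def by (simp add: real_sqrt_divide real_sqrt_mult)
  with assms(2) \<open>0 < s\<close> \<open>0 < r\<close> have "R \<noteq> 0"
    by auto
  have "R\<^sup>2 * m / (2 * eta * real T) = R * m * s / r" and "2 * eta * m * real (D + 1) = R * m * s / r"
    unfolding eta D T using \<open>0 < s\<close> \<open>0 < r\<close> \<open>R \<noteq> 0\<close> by (simp_all add: field_simps power2_eq_square)
  then show ?thesis
    by (simp add: s_def r_def)
qed

lemma mqt_regret_le:
  fixes alpha :: "'m::{finite,linorder} \<Rightarrow> real" and b :: "nat \<Rightarrow> real ^ ('m::{finite,linorder})"
    and theta :: "real ^ ('m::{finite,linorder})"
  assumes "mono alpha" "\<And>i. 0 \<le> alpha i \<and> alpha i \<le> 1"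
    and "\<And>t i. 1 \<le> t \<Longrightarrow> \<bar>y t - b t $ i\<bar> \<le> R" and "0 < eta" and "1 \<le> T"
  shows "regret alpha b y (mqt_theta alpha eta D b y) T theta
    \<le> R\<^sup>2 * real CARD('m) / (2 * eta * real T) + 2 * eta * real CARD('m) * real (D + 1)"
proof -
  have "0 < real T"
    using assms(5) by simp
  have "regret alpha b y (mqt_theta alpha eta D b y) T theta
      \<le> (R\<^sup>2 * CARD('m) / (2 * eta) + eta * CARD('m) * (2 * D + 1) * T / 2) / T"
    unfolding regret_def using mqt_cumulative_regret_le[OF assms(1-4)] \<open>0 < real T\<close>
    by (simp add: diff_divide_distrib[symmetric] right_diff_distrib[symmetric] divide_right_mono)
  also have "\<dots> \<le> R\<^sup>2 * real CARD('m) / (2 * eta * real T) + 2 * eta * real CARD('m) * real (D + 1)"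
    using \<open>0 < real T\<close> assms(4) by (simp add: field_simps)
  finally show ?thesis .
qed

theorem proposition9:
  fixes alpha :: "'m::{finite,linorder} \<Rightarrow> real"
    and b :: "nat \<Rightarrow> real ^ ('m::{finite,linorder})" and y :: "nat \<Rightarrow> real"
    and R eta :: real and D T :: nat and theta :: "real ^ ('m::{finite,linorder})"
  assumes "strict_mono alpha"
    and "\<And>i. 0 < alpha i \<and> alpha i < 1"
    and "\<And>t. t \<ge> 1 \<Longrightarrow> b t \<in> Kord"
    and "\<And>t i. t \<ge> 1 \<Longrightarrow> \<bar>y t - b t $ i\<bar> \<le> R"
    and "eta > 0"
    and "T \<ge> 1"
    and "theta \<in> (\<Inter>t\<in>{1..T+D+1}. shift_set Kord (b t))"
  shows "(regret alpha b y (mqt_theta alpha eta D b y) T theta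
           \<le> R\<^sup>2 * real CARD('m) / (2 * eta * real T) + 2 * eta * real CARD('m) * real (D + 1))
         \<and> (eta = R / 2 * sqrt (1 / (real (D + 1) * real T)) \<longrightarrow>
         regret alpha b y (mqt_theta alpha eta D b y) T theta
           \<le> 2 * R * real CARD('m) * sqrt (real (D + 1)) / sqrt (real T))"
proof -
  have "mono alpha"
    using assms(1) by (rule strict_mono_mono)
  moreover have "\<And>i. 0 \<le> alpha i \<and> alpha i \<le> 1"
    using assms(2) by (simp add: less_imp_le)
  ultimately have "regret alpha b y (mqt_theta alpha eta D b y) T theta
      \<le> R\<^sup>2 * real CARD('m) / (2 * eta * real T) + 2 * eta * real CARD('m) * real (D + 1)"
    using assms(4-6) by (rule mqt_regret_le)
  moreover have "R\<^sup>2 * real CARD('m) / (2 * eta * real T) + 2 * eta * real CARD('m) * real (D + 1)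
      = 2 * R * real CARD('m) * sqrt (real (D + 1)) / sqrt (real T)"
    if "eta = R / 2 * sqrt (1 / (real (D + 1) * real T))"
    using that assms(5,6) by (rule tuned_step_size_bound_eq)
  ultimately show ?thesis
    by auto
qed

end
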